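(* Let $n\geq 4$ and let $F_n=\{0,a_1,\ldots,a_{n-2},1\}$ be the meet-semilattice of order $n$ with least element $0$, greatest element $1$, and $a_1,\ldots,a_{n-2}$ pairwise incomparable. Write $a_0=0$ and $a_{n-1}=1$. Then for each $i\in\{1,\ldots,n-2\}$, \[ \mathrm{cov}_1(a_i)=\{xa_j=xa_k\mid j,k\in\{0,1,\ldots,n-2\}\setminus\{i\}\}\cup\{xa_j=xa_k\mid j,k\in\{i,n-1\}\}, \] and $|\mathrm{cov}_1(a_i)|=(n-2)^2+4$.
   Context: The meet is written as multiplication. An equation of the first kind in one variable $x$ over a semilattice $S$ is a formal expression $xa=xa'$ with $a,a'\in S$; formally it is the ordered pair $(a,a')$. An element $s$ satisfies $xa=xa'$ if $sa=sa'$. $\mathrm{cov}_1(s)$ is the set of equations of this form satisfied by $s$. *)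

theory Defs
  imports Main
begin

text \<open>Equations of the first kind in one variable over a semilattice with carrier S
and meet m: an equation x a = x a' is the ordered pair (a, a').
cov1 s is the set of such equations satisfied by s.\<close>

definition cov1 :: "'a set \<Rightarrow> ('a \<Rightarrow> 'a \<Rightarrow> 'a) \<Rightarrow> 'a \<Rightarrow> ('a \<times> 'a) set" where
  "cov1 S m s = {(a, a'). a \<in> S \<and> a' \<in> S \<and> m s a = m s a'}"

text \<open>The semilattice F_n = {a_0 = 0, a_1, ..., a_(n-2), a_(n-1) = 1}; element a_j is
encoded by its index j, so the carrier is {0..<n}.\<close>

definition F_carrier :: "nat \<Rightarrow> nat set" where
  "F_carrier n = {0..<n}"

definition F_meet :: "nat \<Rightarrow> nat \<Rightarrow> nat \<Rightarrow> nat" where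
  "F_meet n j k = (if j = k then j else if j = n - 1 then k else if k = n - 1 then j else 0)"

end

theory Submission
  imports Defs
begin

text \<open>Left multiplication by a_i takes only two values on F_n: it is a_i on {a_i, 1}
and 0 elsewhere. Since i \<noteq> 0 these values differ, so the equations satisfied by a_i are
exactly the pairs lying in one fibre; the fibres have n - 2 and 2 elements.\<close>

lemma F_meet_left:
  assumes "i \<noteq> n - 1"
  shows "F_meet n i j = (if j \<in> {i, n - 1} then i else 0)"
  using assms unfolding F_meet_def by auto

lemma mem_cov1_F_iff:
  assumes "1 \<le> i" and "i \<le> n - 2"
  shows "(j, k) \<in> cov1 (F_carrier n) (F_meet n) i \<longleftrightarrow>
    j < n \<and> k < n \<and> (j \<in> {i, n - 1} \<longleftrightarrow> k \<in> {i, n - 1})"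
proof -
  have "i \<noteq> n - 1" and "i \<noteq> 0" using assms by linarith+
  then show ?thesis
    unfolding cov1_def F_carrier_def F_meet_left[OF \<open>i \<noteq> n - 1\<close>] by auto
qed

lemma cov1_F_eq_fibres:
  assumes "1 \<le> i" and "i \<le> n - 2"
  shows "cov1 (F_carrier n) (F_meet n) i =
           ({0..n-2} - {i}) \<times> ({0..n-2} - {i}) \<union> {i, n-1} \<times> {i, n-1}"
proof -
  have top_fibre_bound: "j \<in> {i, n - 1} \<Longrightarrow> j < n" for j
    using assms by auto
  have low_fibre: "j \<in> {0..n-2} - {i} \<longleftrightarrow> j < n \<and> j \<notin> {i, n - 1}" for j
    using assms by auto
  show ?thesis
  proof (rule set_eqI, clarify)
    fix j k
    show "(j, k) \<in> cov1 (F_carrier n) (F_meet n) i \<longleftrightarrow>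
        (j, k) \<in> ({0..n-2} - {i}) \<times> ({0..n-2} - {i}) \<union> {i, n-1} \<times> {i, n-1}"
      unfolding mem_cov1_F_iff[OF assms] mem_Sigma_iff Un_iff low_fibre
      using top_fibre_bound by blast
  qed
qed

lemma card_cov1_F:
  assumes "n \<ge> 4" and "1 \<le> i" and "i \<le> n - 2"
  shows "card (cov1 (F_carrier n) (F_meet n) i) = (n - 2)^2 + 4"
proof -
  let ?X = "{0..n-2} - {i}" and ?Y = "{i, n-1}"
  have "?X \<times> ?X \<inter> ?Y \<times> ?Y = {}" using assms by auto
  then have "card (?X \<times> ?X \<union> ?Y \<times> ?Y) = card (?X \<times> ?X) + card (?Y \<times> ?Y)"
    by (intro card_Un_disjoint) auto
  also have "\<dots> = card ?X * card ?X + card ?Y * card ?Y"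
    by (simp only: card_cartesian_product)
  also have "\<dots> = (n - 2)^2 + 4"
    using assms by (simp add: power2_eq_square)
  finally show ?thesis
    unfolding cov1_F_eq_fibres[OF assms(2,3)] .
qed

theorem lemma4:
  fixes n i :: nat
  assumes "n \<ge> 4" and "1 \<le> i" and "i \<le> n - 2"
  shows "(cov1 (F_carrier n) (F_meet n) i =
           {(j, k). j \<in> {0..n-2} - {i} \<and> k \<in> {0..n-2} - {i}}
           \<union> {(j, k). j \<in> {i, n-1} \<and> k \<in> {i, n-1}})
         \<and> card (cov1 (F_carrier n) (F_meet n) i) = (n - 2)^2 + 4"
proof
  show "cov1 (F_carrier n) (F_meet n) i =
      {(j, k). j \<in> {0..n-2} - {i} \<and> k \<in> {0..n-2} - {i}}
      \<union> {(j, k). j \<in> {i, n-1} \<and> k \<in> {i, n-1}}"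
    unfolding cov1_F_eq_fibres[OF assms(2,3)] by blast
  show "card (cov1 (F_carrier n) (F_meet n) i) = (n - 2)^2 + 4"
    using assms by (rule card_cov1_F)
qed

end
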